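(* Consider the FedAvg round $t$ with coordinate-wise chip-diverse REED transmission (defined in the context) with deterministic weights $c_1,\dots,c_M\ge0$, $C_M=\sum_m c_m>0$, and assume $\|g_{k,q}^t\|\le G$ almost surely for all $k,q,t$. Suppose each client $k$ is subject to the per-round average energy constraint $$\frac1d\sum_{j=1}^d\sum_{m=1}^M\left(|a_{k,j,m,+}^t|^2+|a_{k,j,m,-}^t|^2\right)\le E_k,$$ with $E_k>0$. Then the deterministic choice $$\eta=\min_{k\in\{1,\dots,K\}}\frac{E_kK\sqrt d\,\mu_k^2}{C_M\beta QG}$$ satisfies all client energy constraints. Hence, for fixed system parameters ($K,d,Q,G,\sigma_z^2,\{E_k\},\{\mu_k\}$) and fixed chip weights, $\eta=\Theta(1/\beta)$, and both quantities $$\sigma_{\mathrm{air}}^2=(\beta QG)^2+\frac{2\sigma_z^2\sqrt d}{\eta}(\beta QG)+\frac{2d\sigma_z^4}{\eta^2}$$ (for $M=1$, $c_1=1$) and $$\sigma_{\mathrm{air}}^2=\frac{\sum_{m}c_m^2}{C_M^2}(\beta QG)^2+\frac{2\sigma_z^2\sqrt d}{\eta C_M}(\beta QG)+\frac{2dM\sigma_z^4}{\eta^2C_M^2}$$ satisfy $\sigma_{\mathrm{air}}^2=O(\beta^2)$ as $\beta\to0$.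
   Context: FedAvg setup: $K$ clients, model dimension $d$; at round $t$ each client starts from the global model $w^t$ and runs $Q$ local steps $w_{k,q+1}^t=w_{k,q}^t-\beta g_{k,q}^t$ with stepsize $\beta>0$ and stochastic gradients $g_{k,q}^t$; the local increment is $\Delta_k^t=-\beta\sum_{q=0}^{Q-1}g_{k,q}^t$. Coordinate-wise REED transmission: with $\eta>0$, average channel powers $\mu_k^2>0$, and $u_{k,j}^t=\frac1K[\Delta_k^t]_j$, client $k$ transmits on coordinate $j$, chip $m\in\{1,\dots,M\}$, branch $\pm$ the symbol $a_{k,j,m,\pm}^t=\frac{\sqrt{\eta c_m[u_{k,j}^t]_\pm}}{\mu_k}e^{\mathrm{i}\phi_{k,j,m,\pm}^t}$, where $[x]_+=\max\{x,0\}$, $[x]_-=\max\{-x,0\}$ and $\phi$ are phases. $\sigma_z^2>0$ is the receiver noise variance. *)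

theory Defs
  imports "HOL-Analysis.Analysis" "HOL-Library.Landau_Symbols"
begin

definition pos_part :: "real \<Rightarrow> real" where "pos_part x = max x 0"
definition neg_part :: "real \<Rightarrow> real" where "neg_part x = max (- x) 0"

definition local_increment ::
  "real \<Rightarrow> nat \<Rightarrow> (nat \<Rightarrow> nat \<Rightarrow> nat \<Rightarrow> real^'d) \<Rightarrow> nat \<Rightarrow> nat \<Rightarrow> real^'d" where
  "local_increment \<beta> Q g t k = - (\<beta> *\<^sub>R (\<Sum>q<Q. g t k q))"

definition reed_u ::
  "nat \<Rightarrow> real \<Rightarrow> nat \<Rightarrow> (nat \<Rightarrow> nat \<Rightarrow> nat \<Rightarrow> real^'d) \<Rightarrow> nat \<Rightarrow> nat \<Rightarrow> 'd \<Rightarrow> real" where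
  "reed_u K \<beta> Q g t k j = (1 / real K) * (local_increment \<beta> Q g t k $ j)"

definition reed_symbol ::
  "real \<Rightarrow> (nat \<Rightarrow> real) \<Rightarrow> (nat \<Rightarrow> real) \<Rightarrow> nat \<Rightarrow> real \<Rightarrow> nat
   \<Rightarrow> (nat \<Rightarrow> nat \<Rightarrow> nat \<Rightarrow> real^'d)
   \<Rightarrow> (nat \<Rightarrow> nat \<Rightarrow> 'd \<Rightarrow> nat \<Rightarrow> bool \<Rightarrow> real)
   \<Rightarrow> nat \<Rightarrow> nat \<Rightarrow> 'd \<Rightarrow> nat \<Rightarrow> bool \<Rightarrow> complex" where
  "reed_symbol \<eta> c \<mu> K \<beta> Q g \<phi> t k j m b =
     complex_of_real
       (sqrt (\<eta> * c m * (if b then pos_part (reed_u K \<beta> Q g t k j)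
                                else neg_part (reed_u K \<beta> Q g t k j))) / \<mu> k)
     * cis (\<phi> t k j m b)"

definition reed_eta ::
  "nat \<Rightarrow> nat \<Rightarrow> (nat \<Rightarrow> real) \<Rightarrow> (nat \<Rightarrow> real) \<Rightarrow> real \<Rightarrow> nat \<Rightarrow> real \<Rightarrow> real \<Rightarrow> real" where
  "reed_eta K d E \<mu> CM Q G \<beta> =
     Min ((\<lambda>k. E k * real K * sqrt (real d) * (\<mu> k)^2 / (CM * \<beta> * real Q * G)) ` {1..K})"

end

theory Submission
  imports Defs
begin

(* Since [x]_+ + [x]_- = |x|, client k spends the energy eta C_M / (d mu_k^2) * sum_j |u_{k,j}|.
   By Cauchy-Schwarz sum_j |[Delta_k]_j| <= sqrt d * norm Delta_k <= sqrt d * beta Q G, so the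
   energy is at most eta C_M beta Q G / (sqrt d K mu_k^2), which is <= E_k as soon as eta is at most
   the k-th term of the minimum defining eta.  That minimum is A / beta with A > 0, so
   eta = Theta(1/beta), hence 1/eta = O(beta) and every term of sigma_air^2 is O(beta^2). *)

lemma sum_abs_le_sqrt_card_mult_norm:
  fixes x :: "real^'n"
  shows "(\<Sum>j\<in>UNIV. \<bar>x $ j\<bar>) \<le> sqrt (real CARD('n)) * norm x"
proof -
  have "(\<Sum>j\<in>UNIV. \<bar>x $ j\<bar> * \<bar>1\<bar>) \<le> L2_set (\<lambda>j. x $ j) UNIV * L2_set (\<lambda>_. 1) (UNIV::'n set)"
    by (rule L2_set_mult_ineq)
  then show ?thesis
    by (simp add: norm_vec_def L2_set_def mult.commute)
qed

lemma norm_local_increment_le: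
  assumes "\<beta> \<ge> 0" and "\<And>q. norm (g t k q) \<le> G"
  shows "norm (local_increment \<beta> Q g t k) \<le> \<beta> * real Q * G"
proof -
  have "norm (\<Sum>q<Q. g t k q) \<le> (\<Sum>q<Q. norm (g t k q))"
    by (rule norm_sum)
  also have "\<dots> \<le> (\<Sum>q<Q. G)"
    by (intro sum_mono assms(2))
  finally have "norm (\<Sum>q<Q. g t k q) \<le> real Q * G"
    by simp
  then show ?thesis
    using assms(1) by (simp add: local_increment_def mult_left_mono mult.assoc)
qed

lemma sum_abs_reed_u_le:
  fixes g :: "nat \<Rightarrow> nat \<Rightarrow> nat \<Rightarrow> real^'d"
  assumes "\<beta> \<ge> 0" and "\<And>q. norm (g t k q) \<le> G"
  shows "(\<Sum>j\<in>UNIV. \<bar>reed_u K \<beta> Q g t k j\<bar>) \<le> sqrt (real CARD('d)) * (\<beta> * real Q * G) / real K"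
proof -
  have "(\<Sum>j\<in>UNIV. \<bar>reed_u K \<beta> Q g t k j\<bar>) = (\<Sum>j\<in>UNIV. \<bar>local_increment \<beta> Q g t k $ j\<bar>) / real K"
    by (simp add: reed_u_def abs_mult sum_divide_distrib)
  also have "\<dots> \<le> sqrt (real CARD('d)) * norm (local_increment \<beta> Q g t k) / real K"
    by (intro divide_right_mono sum_abs_le_sqrt_card_mult_norm) simp
  also have "\<dots> \<le> sqrt (real CARD('d)) * (\<beta> * real Q * G) / real K"
    by (intro divide_right_mono mult_left_mono norm_local_increment_le assms) simp_all
  finally show ?thesis .
qed

lemma pos_part_add_neg_part: "pos_part x + neg_part x = \<bar>x\<bar>"
  by (simp add: pos_part_def neg_part_def)

lemma cmod_reed_symbol_sq_add:
  assumes "\<eta> \<ge> 0" and "c m \<ge> 0"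
  shows "(cmod (reed_symbol \<eta> c \<mu> K \<beta> Q g \<phi> t k j m True))\<^sup>2
           + (cmod (reed_symbol \<eta> c \<mu> K \<beta> Q g \<phi> t k j m False))\<^sup>2
         = \<eta> * c m * \<bar>reed_u K \<beta> Q g t k j\<bar> / (\<mu> k)\<^sup>2"
proof -
  have "(cmod (complex_of_real (sqrt x / \<mu> k) * cis p))\<^sup>2 = x / (\<mu> k)\<^sup>2" if "x \<ge> 0" for x p
    using that by (simp add: norm_mult norm_divide power_divide)
  moreover have "pos_part x \<ge> 0" "neg_part x \<ge> 0" for x
    by (simp_all add: pos_part_def neg_part_def)
  ultimately show ?thesis
    using assms by (simp add: reed_symbol_def add_divide_distrib[symmetric]
        distrib_left[symmetric] pos_part_add_neg_part)
qed

definition reed_energy ::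
  "real \<Rightarrow> (nat \<Rightarrow> real) \<Rightarrow> (nat \<Rightarrow> real) \<Rightarrow> nat \<Rightarrow> real \<Rightarrow> nat
   \<Rightarrow> (nat \<Rightarrow> nat \<Rightarrow> nat \<Rightarrow> real^'d)
   \<Rightarrow> (nat \<Rightarrow> nat \<Rightarrow> 'd \<Rightarrow> nat \<Rightarrow> bool \<Rightarrow> real)
   \<Rightarrow> nat \<Rightarrow> nat \<Rightarrow> nat \<Rightarrow> real" where
  "reed_energy \<eta> c \<mu> K \<beta> Q g \<phi> t M k =
     (1 / real CARD('d)) *
       (\<Sum>j\<in>UNIV. \<Sum>m=1..M.
          (cmod (reed_symbol \<eta> c \<mu> K \<beta> Q g \<phi> t k j m True))\<^sup>2
        + (cmod (reed_symbol \<eta> c \<mu> K \<beta> Q g \<phi> t k j m False))\<^sup>2)"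

lemma reed_energy_eq:
  fixes g :: "nat \<Rightarrow> nat \<Rightarrow> nat \<Rightarrow> real^'d"
  assumes "\<eta> \<ge> 0" and "\<forall>m\<in>{1..M}. c m \<ge> 0"
  shows "reed_energy \<eta> c \<mu> K \<beta> Q g \<phi> t M k
           = \<eta> * (\<Sum>m=1..M. c m) / (real CARD('d) * (\<mu> k)\<^sup>2)
             * (\<Sum>j\<in>UNIV. \<bar>reed_u K \<beta> Q g t k j\<bar>)"
proof -
  have "reed_energy \<eta> c \<mu> K \<beta> Q g \<phi> t M k
          = (1 / real CARD('d)) * (\<Sum>j\<in>UNIV. \<Sum>m=1..M. \<eta> * c m * \<bar>reed_u K \<beta> Q g t k j\<bar> / (\<mu> k)\<^sup>2)"
    unfolding reed_energy_def using assms
    by (intro arg_cong2[where f = "(*)"] sum.cong refl cmod_reed_symbol_sq_add) auto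
  then show ?thesis
    by (simp add: sum_distrib_left sum_distrib_right sum_divide_distrib[symmetric] mult_ac)
qed

lemma reed_energy_le:
  fixes g :: "nat \<Rightarrow> nat \<Rightarrow> nat \<Rightarrow> real^'d"
  assumes "\<eta> \<ge> 0" and "\<forall>m\<in>{1..M}. c m \<ge> 0" and "\<beta> \<ge> 0"
    and "\<And>q. norm (g t k q) \<le> G"
  shows "reed_energy \<eta> c \<mu> K \<beta> Q g \<phi> t M k
           \<le> \<eta> * (\<Sum>m=1..M. c m) * (\<beta> * real Q * G)
             / (sqrt (real CARD('d)) * real K * (\<mu> k)\<^sup>2)"
proof -
  define s where "s = sqrt (real CARD('d))"
  have d: "real CARD('d) = s * s" and "s > 0"
    by (simp_all add: s_def)
  have "(\<Sum>j\<in>UNIV. \<bar>reed_u K \<beta> Q g t k j\<bar>) \<le> s * (\<beta> * real Q * G) / real K"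
    using sum_abs_reed_u_le[where g = g and t = t and k = k, OF assms(3,4)] by (simp add: s_def)
  moreover have "0 \<le> \<eta> * (\<Sum>m=1..M. c m) / (s * s * (\<mu> k)\<^sup>2)"
    using assms(1,2) \<open>s > 0\<close> by (intro divide_nonneg_nonneg mult_nonneg_nonneg sum_nonneg) auto
  ultimately have "reed_energy \<eta> c \<mu> K \<beta> Q g \<phi> t M k
          \<le> \<eta> * (\<Sum>m=1..M. c m) / (s * s * (\<mu> k)\<^sup>2) * (s * (\<beta> * real Q * G) / real K)"
    unfolding reed_energy_eq[OF assms(1,2)] d by (rule mult_left_mono)
  also have "\<dots> = \<eta> * (\<Sum>m=1..M. c m) * (\<beta> * real Q * G) / (s * real K * (\<mu> k)\<^sup>2)"
    using \<open>s > 0\<close> by (simp add: field_simps)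
  finally show ?thesis
    by (simp add: s_def)
qed

lemma reed_energy_le_budget:
  fixes g :: "nat \<Rightarrow> nat \<Rightarrow> nat \<Rightarrow> real^'d"
  assumes "\<forall>m\<in>{1..M}. c m \<ge> 0" and "(\<Sum>m=1..M. c m) > 0"
    and "K > 0" and "Q > 0" and "G > 0" and "(\<mu> k)\<^sup>2 > 0" and "\<beta> > 0"
    and "\<And>q. norm (g t k q) \<le> G" and "\<eta> \<ge> 0"
    and "\<eta> \<le> E k * real K * sqrt (real CARD('d)) * (\<mu> k)\<^sup>2 / ((\<Sum>m=1..M. c m) * \<beta> * real Q * G)"
  shows "reed_energy \<eta> c \<mu> K \<beta> Q g \<phi> t M k \<le> E k"
proof -
  define X where "X = (\<Sum>m=1..M. c m) * \<beta> * real Q * G"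
  define D where "D = sqrt (real CARD('d)) * real K * (\<mu> k)\<^sup>2"
  have "X > 0" "D > 0"
    using assms(2-7) by (simp_all add: X_def D_def)
  have "reed_energy \<eta> c \<mu> K \<beta> Q g \<phi> t M k
          \<le> \<eta> * (\<Sum>m=1..M. c m) * (\<beta> * real Q * G) / (sqrt (real CARD('d)) * real K * (\<mu> k)\<^sup>2)"
    using assms(1,7-9) by (intro reed_energy_le) auto
  also have "\<dots> = \<eta> * X / D"
    by (simp add: X_def D_def mult_ac)
  also have "\<eta> * X / D \<le> E k"
  proof -
    have "\<eta> \<le> E k * D / X"
      using assms(10) by (simp add: X_def D_def mult_ac)
    then show ?thesis
      using \<open>X > 0\<close> \<open>D > 0\<close> by (simp add: pos_le_divide_eq pos_divide_le_eq mult_ac)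
  qed
  finally show ?thesis .
qed

lemma reed_eta_le:
  assumes "k \<in> {1..K}"
  shows "reed_eta K d E \<mu> CM Q G \<beta> \<le> E k * real K * sqrt (real d) * (\<mu> k)\<^sup>2 / (CM * \<beta> * real Q * G)"
  unfolding reed_eta_def using assms by (intro Min_le) auto

lemma reed_eta_eq_divide:
  assumes "K > 0" and "\<beta> > 0"
  shows "reed_eta K d E \<mu> CM Q G \<beta> = reed_eta K d E \<mu> CM Q G 1 / \<beta>"
proof -
  have "mono (\<lambda>x::real. x / \<beta>)"
    using assms(2) by (auto intro!: monoI divide_right_mono)
  then show ?thesis
    using assms(1) unfolding reed_eta_def
    by (subst mono_Min_commute) (auto simp: image_image mult_ac)
qed

lemma reed_eta_pos:
  assumes "K > 0" and "\<forall>k\<in>{1..K}. E k > 0" and "\<forall>k\<in>{1..K}. (\<mu> k)\<^sup>2 > 0"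
    and "d > 0" and "CM > 0" and "Q > 0" and "G > 0" and "\<beta> > 0"
  shows "reed_eta K d E \<mu> CM Q G \<beta> > 0"
  unfolding reed_eta_def using assms by (subst Min_gr_iff) (auto intro!: divide_pos_pos mult_pos_pos)

lemma reed_eta_bigtheta:
  assumes "K > 0" and "\<forall>k\<in>{1..K}. E k > 0" and "\<forall>k\<in>{1..K}. (\<mu> k)\<^sup>2 > 0"
    and "d > 0" and "CM > 0" and "Q > 0" and "G > 0"
  shows "(\<lambda>\<beta>. reed_eta K d E \<mu> CM Q G \<beta>) \<in> \<Theta>[at_right 0](\<lambda>\<beta>. 1 / \<beta>)"
proof -
  let ?A = "reed_eta K d E \<mu> CM Q G 1"
  have "\<forall>\<^sub>F \<beta> in at_right 0. reed_eta K d E \<mu> CM Q G \<beta> = ?A * (1 / \<beta>)"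
    using eventually_at_right_less[of 0]
    by eventually_elim (subst reed_eta_eq_divide[OF assms(1)], simp_all)
  moreover have "(\<lambda>\<beta>. ?A * (1 / \<beta>)) \<in> \<Theta>[at_right 0](\<lambda>\<beta>. 1 / \<beta>)"
    using reed_eta_pos[OF assms zero_less_one] by (subst landau_theta.cmult_in_iff) simp_all
  ultimately show ?thesis
    by (rule landau_theta.in_cong[THEN iffD2])
qed

lemma bigo_power2_if_bigtheta_inverse:
  fixes \<eta> :: "real \<Rightarrow> real"
  assumes "\<eta> \<in> \<Theta>[at_right 0](\<lambda>\<beta>. 1 / \<beta>)"
  shows "(\<lambda>\<beta>. a * \<beta>\<^sup>2 + b * \<beta> / \<eta> \<beta> + c / (\<eta> \<beta>)\<^sup>2) \<in> O[at_right 0](\<lambda>\<beta>. \<beta>\<^sup>2)"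
proof -
  have "(\<lambda>\<beta>. inverse (\<eta> \<beta>)) \<in> \<Theta>[at_right 0](\<lambda>\<beta>. inverse (1 / \<beta>))"
    unfolding bigtheta_inverse by (rule assms)
  then have inv: "(\<lambda>\<beta>. inverse (\<eta> \<beta>)) \<in> O[at_right 0](\<lambda>\<beta>. \<beta>)"
    by (simp add: bigthetaD1)
  have "(\<lambda>\<beta>. b * (\<beta> * inverse (\<eta> \<beta>))) \<in> O[at_right 0](\<lambda>\<beta>. \<beta> * \<beta>)"
    using inv by simp
  moreover have "(\<lambda>\<beta>. c * (inverse (\<eta> \<beta>))\<^sup>2) \<in> O[at_right 0](\<lambda>\<beta>. \<beta>\<^sup>2)"
    using landau_o.big_power[OF inv] by simp
  ultimately show ?thesis
    by (intro sum_in_bigo) (simp_all add: divide_inverse power2_eq_square power_inverse mult.assoc)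
qed

theorem lemma2:
  fixes K M Q :: nat
    and c E \<mu> :: "nat \<Rightarrow> real"
    and G \<sigma>z2 :: real
  assumes K_pos: "K > 0" and M_pos: "M > 0" and Q_pos: "Q > 0"
    and G_pos: "G > 0" and \<sigma>_pos: "\<sigma>z2 > 0"
    and c_nonneg: "\<forall>m\<in>{1..M}. c m \<ge> 0"
    and CM_pos: "(\<Sum>m=1..M. c m) > 0"
    and E_pos: "\<forall>k\<in>{1..K}. E k > 0"
    and \<mu>_pos: "\<forall>k\<in>{1..K}. (\<mu> k)^2 > 0"
  shows
    "(\<forall>(\<beta>::real) (g :: nat \<Rightarrow> nat \<Rightarrow> nat \<Rightarrow> real^'d) \<phi> t.
        \<beta> > 0 \<longrightarrow>
        (\<forall>t' k q. norm (g t' k q) \<le> G) \<longrightarrow>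
        (\<forall>k\<in>{1..K}.
           (1 / real CARD('d)) *
             (\<Sum>j\<in>(UNIV::'d set). \<Sum>m=1..M.
                (cmod (reed_symbol (reed_eta K CARD('d) E \<mu> (\<Sum>m=1..M. c m) Q G \<beta>)
                         c \<mu> K \<beta> Q g \<phi> t k j m True))^2
              + (cmod (reed_symbol (reed_eta K CARD('d) E \<mu> (\<Sum>m=1..M. c m) Q G \<beta>)
                         c \<mu> K \<beta> Q g \<phi> t k j m False))^2)
           \<le> E k))
     \<and> (\<lambda>\<beta>. reed_eta K CARD('d) E \<mu> (\<Sum>m=1..M. c m) Q G \<beta>) \<in> \<Theta>[at_right 0](\<lambda>\<beta>. 1 / \<beta>)
     \<and> (\<lambda>\<beta>. let \<eta> = reed_eta K CARD('d) E \<mu> 1 Q G \<beta> in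
           (\<beta> * real Q * G)^2 + 2 * \<sigma>z2 * sqrt (real CARD('d)) / \<eta> * (\<beta> * real Q * G)
           + 2 * real CARD('d) * \<sigma>z2^2 / \<eta>^2) \<in> O[at_right 0](\<lambda>\<beta>. \<beta>^2)
     \<and> (\<lambda>\<beta>. let \<eta> = reed_eta K CARD('d) E \<mu> (\<Sum>m=1..M. c m) Q G \<beta>;
                 CM = (\<Sum>m=1..M. c m) in
           (\<Sum>m=1..M. (c m)^2) / CM^2 * (\<beta> * real Q * G)^2
           + 2 * \<sigma>z2 * sqrt (real CARD('d)) / (\<eta> * CM) * (\<beta> * real Q * G)
           + 2 * real CARD('d) * real M * \<sigma>z2^2 / (\<eta>^2 * CM^2)) \<in> O[at_right 0](\<lambda>\<beta>. \<beta>^2)"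
proof -
  let ?CM = "\<Sum>m=1..M. c m"
  let ?d = "CARD('d)"
  have energy: "reed_energy (reed_eta K ?d E \<mu> ?CM Q G \<beta>) c \<mu> K \<beta> Q g \<phi> t M k \<le> E k"
    if "\<beta> > 0" and "\<forall>t' k q. norm (g t' k q) \<le> G" and "k \<in> {1..K}"
    for \<beta> and g :: "nat \<Rightarrow> nat \<Rightarrow> nat \<Rightarrow> real^'d" and \<phi> t k
    using assms that reed_eta_le[OF that(3)]
    by (intro reed_energy_le_budget less_imp_le[OF reed_eta_pos]) auto
  have "(\<lambda>\<beta>. reed_eta K ?d E \<mu> C Q G \<beta>) \<in> \<Theta>[at_right 0](\<lambda>\<beta>. 1 / \<beta>)" if "C > 0" for C
    using assms that by (intro reed_eta_bigtheta) auto
  from this[OF CM_pos] this[of 1] show ?thesis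
    using energy
      bigo_power2_if_bigtheta_inverse[of "reed_eta K ?d E \<mu> 1 Q G"
        "(real Q * G)\<^sup>2" "2 * \<sigma>z2 * sqrt ?d * (real Q * G)" "2 * ?d * \<sigma>z2\<^sup>2"]
      bigo_power2_if_bigtheta_inverse[of "reed_eta K ?d E \<mu> ?CM Q G"
        "(\<Sum>m=1..M. (c m)\<^sup>2) / ?CM\<^sup>2 * (real Q * G)\<^sup>2" "2 * \<sigma>z2 * sqrt ?d * (real Q * G) / ?CM"
        "2 * ?d * M * \<sigma>z2\<^sup>2 / ?CM\<^sup>2"]
    by (simp add: reed_energy_def Let_def power_mult_distrib mult_ac)
qed

end
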